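(* Let $L$ be an $R_0$-algebra and $k\in[0,1)$. Given any chain of fated filters $F_0\subset F_1\subset\cdots\subset F_n=L$ of $L$, there exists an $(\in,\in\vee q_k)$-fuzzy fated filter $\mu$ of $L$ whose level fated filters $U(\mu;t)=\{x\in L\mid\mu(x)\ge t\}$, $t\in(0,\tfrac{1-k}{2}]$, are precisely the members $F_0,F_1,\dots,F_n$ of the chain, and such that $U(\mu;\tfrac{1-k}{2})=F_0$.
   Context: An $R_0$-algebra is a bounded distributive lattice $(L,\wedge,\vee,0,1)$ with an order-reversing involution $\neg$ and a binary operation $\to$ such that for all $x,y,z\in L$: $x\to y=\neg y\to\neg x$; $1\to x=x$; $(y\to z)\wedge((x\to y)\to(x\to z))=y\to z$; $x\to(y\to z)=y\to(x\to z)$; $x\to(y\vee z)=(x\to y)\vee(x\to z)$; $(x\to y)\vee((x\to y)\to(\neg x\vee y))=1$. A fated filter of $L$ is a nonempty subset $A\subseteq L$ with $1\in A$ such that for all $x,y\in L$ and $a\in A$, $a\to((x\to y)\to x)\in A$ implies $x\in A$. For $x\in L$, $t\in(0,1]$ and a fuzzy subset $\mu:L\to[0,1]$: $x_t\in\mu$ iff $\mu(x)\ge t$; $x_t\,q_k\,\mu$ iff $\mu(x)+t+k>1$; $x_t\in\vee q_k\,\mu$ iff $x_t\in\mu$ or $x_t\,q_k\,\mu$. $\mu$ is an $(\in,\in\vee q_k)$-fuzzy fated filter of $L$ if (1) for all $x\in L$, $t\in(0,1]$: $x_t\in\mu\Rightarrow 1_t\in\vee q_k\,\mu$; and (2) for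 all $x,a,y\in L$, $t,s\in(0,1]$: if $(a\to((x\to y)\to x))_t\in\mu$ and $a_s\in\mu$ then $x_{\min\{t,s\}}\in\vee q_k\,\mu$. *)

theory Defs
  imports Main "HOL.Real"
begin

text \<open>An R0-algebra: the carrier is the whole type 'a, which is a bounded distributive
lattice (inf, sup, bot = 0, top = 1); neg is an order-reversing involution and imp
is the implication.\<close>

definition R0_algebra :: "('a::{bounded_lattice,distrib_lattice} \<Rightarrow> 'a) \<Rightarrow> ('a \<Rightarrow> 'a \<Rightarrow> 'a) \<Rightarrow> bool" where
  "R0_algebra neg imp \<longleftrightarrow>
     (\<forall>x. neg (neg x) = x) \<and>
     (\<forall>x y. x \<le> y \<longrightarrow> neg y \<le> neg x) \<and>
     (\<forall>x y. imp x y = imp (neg y) (neg x)) \<and>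
     (\<forall>x. imp top x = x) \<and>
     (\<forall>x y z. inf (imp y z) (imp (imp x y) (imp x z)) = imp y z) \<and>
     (\<forall>x y z. imp x (imp y z) = imp y (imp x z)) \<and>
     (\<forall>x y z. imp x (sup y z) = sup (imp x y) (imp x z)) \<and>
     (\<forall>x y. sup (imp x y) (imp (imp x y) (sup (neg x) y)) = top)"

definition fated_filter :: "('a::bounded_lattice \<Rightarrow> 'a \<Rightarrow> 'a) \<Rightarrow> 'a set \<Rightarrow> bool" where
  "fated_filter imp A \<longleftrightarrow> A \<noteq> {} \<and> top \<in> A \<and>
     (\<forall>x y a. a \<in> A \<longrightarrow> imp a (imp (imp x y) x) \<in> A \<longrightarrow> x \<in> A)"

definition fin :: "('a \<Rightarrow> real) \<Rightarrow> 'a \<Rightarrow> real \<Rightarrow> bool" where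
  "fin mu x t \<longleftrightarrow> mu x \<ge> t"

definition fq :: "real \<Rightarrow> ('a \<Rightarrow> real) \<Rightarrow> 'a \<Rightarrow> real \<Rightarrow> bool" where
  "fq k mu x t \<longleftrightarrow> mu x + t + k > 1"

definition finvq :: "real \<Rightarrow> ('a \<Rightarrow> real) \<Rightarrow> 'a \<Rightarrow> real \<Rightarrow> bool" where
  "finvq k mu x t \<longleftrightarrow> fin mu x t \<or> fq k mu x t"

definition fuzzy_subset :: "('a \<Rightarrow> real) \<Rightarrow> bool" where
  "fuzzy_subset mu \<longleftrightarrow> (\<forall>x. 0 \<le> mu x \<and> mu x \<le> 1)"

definition in_invq_fuzzy_fated_filter ::
  "real \<Rightarrow> ('a::bounded_lattice \<Rightarrow> 'a \<Rightarrow> 'a) \<Rightarrow> ('a \<Rightarrow> real) \<Rightarrow> bool" where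
  "in_invq_fuzzy_fated_filter k imp mu \<longleftrightarrow> fuzzy_subset mu \<and>
     (\<forall>x t. 0 < t \<and> t \<le> 1 \<longrightarrow> fin mu x t \<longrightarrow> finvq k mu top t) \<and>
     (\<forall>x a y t s. 0 < t \<and> t \<le> 1 \<and> 0 < s \<and> s \<le> 1 \<longrightarrow>
        fin mu (imp a (imp (imp x y) x)) t \<longrightarrow> fin mu a s \<longrightarrow> finvq k mu x (min t s))"

definition level_set :: "('a \<Rightarrow> real) \<Rightarrow> real \<Rightarrow> 'a set" where
  "level_set mu t = {x. mu x \<ge> t}"

end

theory Submission
  imports Defs
begin

text \<open>Grade the elements by the first member of the chain containing them: \<open>\<mu> x = c / (i + 1)\<close>
  where \<open>i\<close> is the least index with \<open>x \<in> F\<^sub>i\<close> and \<open>c = (1 - k) / 2\<close>. Since \<open>\<mu>\<close> is decreasing in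
  this index, its level sets are exactly the members of the chain. Because each \<open>F\<^sub>i\<close> is a
  fated filter, \<open>\<mu>\<close> satisfies \<open>\<mu> 1 \<ge> \<mu> x\<close> and \<open>\<mu> x \<ge> min (\<mu> a) (\<mu> (a \<rightarrow> ((x \<rightarrow> y) \<rightarrow> x)))\<close>,
  which already makes it an \<open>(\<in>, \<in>\<or>q\<^sub>k)\<close>-fuzzy fated filter for every \<open>k\<close>.\<close>

definition chain_index :: "(nat \<Rightarrow> 'a set) \<Rightarrow> 'a \<Rightarrow> nat" where
  "chain_index F x = (LEAST i. x \<in> F i)"

lemma chain_index_le:
  assumes "F n = UNIV"
  shows "chain_index F x \<le> n"
  unfolding chain_index_def by (rule Least_le) (simp add: assms)

lemma mem_chain_iff_chain_index_le:
  assumes chain: "\<And>i. i < n \<Longrightarrow> F i \<subseteq> F (Suc i)" and "F n = UNIV" and "i \<le> n"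
  shows "x \<in> F i \<longleftrightarrow> chain_index F x \<le> i"
proof
  assume "x \<in> F i"
  then show "chain_index F x \<le> i" unfolding chain_index_def by (rule Least_le)
next
  assume le: "chain_index F x \<le> i"
  have "x \<in> F (chain_index F x)"
    unfolding chain_index_def by (rule LeastI[of _ n]) (simp add: \<open>F n = UNIV\<close>)
  moreover have "F j \<subseteq> F i" if "j \<le> i" for j
    using that
  proof (induction i rule: dec_induct)
    case (step i')
    then show ?case using chain[of i'] \<open>i \<le> n\<close> by auto
  qed simp
  ultimately show "x \<in> F i" using le by blast
qed

lemma level_set_comp_chain_index:
  assumes "\<And>i. i < n \<Longrightarrow> F i \<subseteq> F (Suc i)" and "F n = UNIV"
    and "strict_antimono_on UNIV g" and "i \<le> n"
  shows "level_set (g \<circ> chain_index F) (g i) = F i"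
proof -
  have "g i \<le> g j \<longleftrightarrow> j \<le> i" for j
    using monotone_onD[OF \<open>strict_antimono_on UNIV g\<close>, of i j]
      monotone_onD[OF \<open>strict_antimono_on UNIV g\<close>, of j i]
    by (cases i j rule: linorder_cases) auto
  then show ?thesis
    using mem_chain_iff_chain_index_le[of n F i, OF assms(1,2) \<open>i \<le> n\<close>] by (auto simp: level_set_def)
qed

lemma level_set_comp_chain_index_in_chain:
  assumes "\<And>i. i < n \<Longrightarrow> F i \<subseteq> F (Suc i)" and "F n = UNIV"
    and "antimono g" and "t \<le> g 0"
  shows "level_set (g \<circ> chain_index F) t \<in> F ` {..n}"
proof -
  define I where "I = {i. i \<le> n \<and> t \<le> g i}"
  have I: "finite I" "0 \<in> I" using \<open>t \<le> g 0\<close> by (auto simp: I_def)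
  have "Max I \<in> I" using I by (intro Max_in) auto
  then have Max: "Max I \<le> n" "t \<le> g (Max I)" by (simp_all add: I_def)
  have "t \<le> g j \<longleftrightarrow> j \<le> Max I" if "j \<le> n" for j
  proof
    assume "t \<le> g j"
    then show "j \<le> Max I" using I that by (intro Max_ge) (auto simp: I_def)
  next
    assume "j \<le> Max I"
    then show "t \<le> g j" using Max(2) \<open>antimono g\<close> by (auto dest: antimonoD)
  qed
  then have "x \<in> level_set (g \<circ> chain_index F) t \<longleftrightarrow> x \<in> F (Max I)" for x
    using mem_chain_iff_chain_index_le[of n F "Max I" x, OF assms(1,2) Max(1)]
      chain_index_le[of F n x, OF \<open>F n = UNIV\<close>]
    by (simp add: level_set_def)
  then have "level_set (g \<circ> chain_index F) t = F (Max I)" by blast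
  then show ?thesis using Max(1) by simp
qed

lemma level_sets_comp_chain_index:
  assumes chain: "\<And>i. i < n \<Longrightarrow> F i \<subseteq> F (Suc i)" and "F n = UNIV"
    and "strict_antimono_on UNIV g" and "0 < g n"
  shows "level_set (g \<circ> chain_index F) ` {t. 0 < t \<and> t \<le> g 0} = F ` {..n}"
proof
  have "antimono g" using \<open>strict_antimono_on UNIV g\<close> by (simp add: strict_antimono_iff_antimono)
  then show "level_set (g \<circ> chain_index F) ` {t. 0 < t \<and> t \<le> g 0} \<subseteq> F ` {..n}"
    using level_set_comp_chain_index_in_chain[of n F, OF chain \<open>F n = UNIV\<close>]
    by (intro image_subsetI) simp
  show "F ` {..n} \<subseteq> level_set (g \<circ> chain_index F) ` {t. 0 < t \<and> t \<le> g 0}"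
  proof (rule image_subsetI)
    fix i assume "i \<in> {..n}"
    then have "0 < g i" "g i \<le> g 0"
      using \<open>0 < g n\<close> \<open>antimono g\<close> by (auto dest: antimonoD intro: less_le_trans)
    moreover have "F i = level_set (g \<circ> chain_index F) (g i)"
      using level_set_comp_chain_index[of n F, OF chain assms(2,3)] \<open>i \<in> {..n}\<close> by simp
    ultimately show "F i \<in> level_set (g \<circ> chain_index F) ` {t. 0 < t \<and> t \<le> g 0}" by simp
  qed
qed

lemma comp_chain_index_fated_filter_min_le:
  assumes "\<And>i. i < n \<Longrightarrow> F i \<subseteq> F (Suc i)" and "F n = UNIV"
    and "\<And>i. i \<le> n \<Longrightarrow> fated_filter imp (F i)" and "antimono g"
  defines "mu \<equiv> g \<circ> chain_index F"
  shows "min (mu a) (mu (imp a (imp (imp x y) x))) \<le> mu x"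
proof -
  define i where "i = max (chain_index F a) (chain_index F (imp a (imp (imp x y) x)))"
  have "i \<le> n" using chain_index_le[of F n, OF \<open>F n = UNIV\<close>] by (simp add: i_def)
  note mem = mem_chain_iff_chain_index_le[of n F i, OF assms(1,2) this]
  have "chain_index F a \<le> i" "chain_index F (imp a (imp (imp x y) x)) \<le> i"
    by (simp_all add: i_def)
  then have "a \<in> F i" "imp a (imp (imp x y) x) \<in> F i" by (simp_all add: mem)
  then have "x \<in> F i" using assms(3)[OF \<open>i \<le> n\<close>] unfolding fated_filter_def by blast
  then have "g i \<le> mu x" using \<open>antimono g\<close> by (simp add: mem mu_def antimonoD)
  moreover have "min (mu a) (mu (imp a (imp (imp x y) x))) = g i"
    using \<open>antimono g\<close> by (simp add: mu_def i_def min_of_antimono)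
  ultimately show ?thesis by simp
qed

lemma in_invq_fuzzy_fated_filterI:
  assumes "fuzzy_subset mu" and "\<And>x. mu x \<le> mu top"
    and "\<And>a x y. min (mu a) (mu (imp a (imp (imp x y) x))) \<le> mu x"
  shows "in_invq_fuzzy_fated_filter k imp mu"
  unfolding in_invq_fuzzy_fated_filter_def finvq_def fin_def
proof (intro conjI allI impI disjI1)
  show "t \<le> mu top" if "t \<le> mu x" for x t
    using that assms(2)[of x] by linarith
  show "min t s \<le> mu x" if "t \<le> mu (imp a (imp (imp x y) x))" and "s \<le> mu a" for x a y t s
    using that assms(3)[of a x y] by linarith
qed (rule assms(1))

lemma in_invq_fuzzy_fated_filter_comp_chain_index:
  assumes chain: "\<And>i. i < n \<Longrightarrow> F i \<subseteq> F (Suc i)" and "F n = UNIV"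
    and filters: "\<And>i. i \<le> n \<Longrightarrow> fated_filter imp (F i)"
    and "antimono g" and "\<And>i. 0 \<le> g i" and "g 0 \<le> 1"
  shows "in_invq_fuzzy_fated_filter k imp (g \<circ> chain_index F)"
proof (rule in_invq_fuzzy_fated_filterI)
  show "fuzzy_subset (g \<circ> chain_index F)"
    using assms(5,6) \<open>antimono g\<close> by (auto simp: fuzzy_subset_def dest: antimonoD intro: order_trans)
  have "top \<in> F 0" using filters[of 0] by (simp add: fated_filter_def)
  then have "chain_index F top = 0"
    using mem_chain_iff_chain_index_le[of n F 0 top, OF chain \<open>F n = UNIV\<close>] by simp
  then show "(g \<circ> chain_index F) x \<le> (g \<circ> chain_index F) top" for x
    using \<open>antimono g\<close> by (simp add: antimonoD)
  show "min ((g \<circ> chain_index F) a) ((g \<circ> chain_index F) (imp a (imp (imp x y) x)))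
      \<le> (g \<circ> chain_index F) x" for a x y
    using comp_chain_index_fated_filter_min_le[of n F, OF chain \<open>F n = UNIV\<close> filters \<open>antimono g\<close>] .
qed

theorem theorem3p26:
  fixes neg :: "'a::{bounded_lattice,distrib_lattice} \<Rightarrow> 'a"
    and imp :: "'a \<Rightarrow> 'a \<Rightarrow> 'a"
    and k :: real and n :: nat and F :: "nat \<Rightarrow> 'a set"
  assumes "R0_algebra neg imp"
    and "0 \<le> k" and "k < 1"
    and "\<And>i. i \<le> n \<Longrightarrow> fated_filter imp (F i)"
    and "\<And>i. i < n \<Longrightarrow> F i \<subset> F (Suc i)"
    and "F n = UNIV"
  shows "\<exists>mu. in_invq_fuzzy_fated_filter k imp mu
           \<and> level_set mu ` {t. 0 < t \<and> t \<le> (1 - k) / 2} = F ` {..n}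
           \<and> level_set mu ((1 - k) / 2) = F 0"
proof -
  define c where "c = (1 - k) / 2"
  define g where "g i = c / (real i + 1)" for i
  have c: "0 < c" "c \<le> 1" using assms(2,3) by (auto simp: c_def)
  have chain: "\<And>i. i < n \<Longrightarrow> F i \<subseteq> F (Suc i)" using assms(5) by blast
  have "strict_antimono_on UNIV g"
    using c by (intro monotone_onI) (simp add: g_def frac_less2)
  then have "antimono g" by (simp add: strict_antimono_iff_antimono)
  have g: "g 0 = c" "0 < g i" for i using c by (simp_all add: g_def)
  show ?thesis unfolding c_def[symmetric]
  proof (intro exI conjI)
    show "in_invq_fuzzy_fated_filter k imp (g \<circ> chain_index F)"
      using in_invq_fuzzy_fated_filter_comp_chain_index[OF chain assms(6,4) \<open>antimono g\<close>] g c
      by (simp add: less_imp_le)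
    show "level_set (g \<circ> chain_index F) ` {t. 0 < t \<and> t \<le> c} = F ` {..n}"
      using level_sets_comp_chain_index[OF chain assms(6) \<open>strict_antimono_on UNIV g\<close>] g by simp
    show "level_set (g \<circ> chain_index F) c = F 0"
      using level_set_comp_chain_index[OF chain assms(6) \<open>strict_antimono_on UNIV g\<close>, of 0] g by simp
  qed
qed

end
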